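(* Let $\mathcal A\subseteq\mathcal B(H)$ be a von Neumann algebra, $\xi\in H$, and let $\epsilon_A\in\mathcal A$ be the support projection of $\omega_\xi|_{\mathcal A}$. Suppose that for every self-adjoint $a\in\mathcal A$ and every $\epsilon>0$ there exists $\hat a\in\mathcal A'$ with $\|a\xi-\hat a\xi\|<\epsilon$. Then $\epsilon_A a=a\epsilon_A$ for every $a\in\mathcal A$, i.e. $\epsilon_A$ is central in $\mathcal A$.
   Context: $\omega_\xi(x)=\langle x\xi,\xi\rangle$. The support of a normal positive functional $\omega$ on a von Neumann algebra $\mathcal M$ is the smallest projection $p\in\mathcal M$ with $\omega(x)=\omega(pxp)$ for all $x\in\mathcal M$. *)

theory Defs
  imports Complex_Main
begin

class complex_inner = real_normed_vector +
  fixes scaleC :: "complex \<Rightarrow> 'a \<Rightarrow> 'a"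
    and cinner :: "'a \<Rightarrow> 'a \<Rightarrow> complex"
  assumes scaleC_of_real: "scaleC (complex_of_real r) x = scaleR r x"
    and scaleC_add_right: "scaleC c (x + y) = scaleC c x + scaleC c y"
    and scaleC_add_left: "scaleC (c + d) x = scaleC c x + scaleC d x"
    and scaleC_scaleC: "scaleC c (scaleC d x) = scaleC (c * d) x"
    and cinner_add_left: "cinner (x + y) z = cinner x z + cinner y z"
    and cinner_scaleC_left: "cinner (scaleC c x) y = c * cinner x y"
    and cinner_commute: "cinner y x = cnj (cinner x y)"
    and cinner_self_norm: "cinner x x = complex_of_real ((norm x)\<^sup>2)"

class chilbert = complex_inner + complete_space

definition clinear :: "('a::complex_inner \<Rightarrow> 'b::complex_inner) \<Rightarrow> bool" where
  "clinear T \<longleftrightarrow> (\<forall>x y. T (x + y) = T x + T y) \<and> (\<forall>c x. T (scaleC c x) = scaleC c (T x))"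

definition bounded_op :: "('a::complex_inner \<Rightarrow> 'a) \<Rightarrow> bool" where
  "bounded_op T \<longleftrightarrow> clinear T \<and> (\<exists>K. \<forall>x. norm (T x) \<le> K * norm x)"

definition is_adjoint :: "('a::complex_inner \<Rightarrow> 'a) \<Rightarrow> ('a \<Rightarrow> 'a) \<Rightarrow> bool" where
  "is_adjoint T S \<longleftrightarrow> (\<forall>x y. cinner (T x) y = cinner x (S y))"

text \<open>The Hilbert space adjoint (exists and is unique for bounded operators on a Hilbert space).\<close>
definition adj :: "('a::complex_inner \<Rightarrow> 'a) \<Rightarrow> ('a \<Rightarrow> 'a)" where
  "adj T = (SOME S. is_adjoint T S)"

definition commutant :: "('a::complex_inner \<Rightarrow> 'a) set \<Rightarrow> ('a \<Rightarrow> 'a) set" where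
  "commutant A = {T. bounded_op T \<and> (\<forall>S\<in>A. T \<circ> S = S \<circ> T)}"

text \<open>A von Neumann algebra on H: a self-adjoint set of bounded operators equal to its
bicommutant (equivalently, by the bicommutant theorem, a unital weakly closed *-subalgebra of B(H)).\<close>
definition von_neumann_algebra :: "('a::chilbert \<Rightarrow> 'a) set \<Rightarrow> bool" where
  "von_neumann_algebra A \<longleftrightarrow>
     (\<forall>T\<in>A. bounded_op T) \<and> (\<forall>T\<in>A. adj T \<in> A) \<and> commutant (commutant A) = A"

definition is_projection :: "('a::complex_inner \<Rightarrow> 'a) \<Rightarrow> bool" where
  "is_projection P \<longleftrightarrow> bounded_op P \<and> P \<circ> P = P \<and> adj P = P"

definition omega :: "'a::complex_inner \<Rightarrow> ('a \<Rightarrow> 'a) \<Rightarrow> complex" where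
  "omega \<xi> x = cinner (x \<xi>) \<xi>"

text \<open>p is the support projection of the restriction of \<omega>_\<xi> to A: the smallest projection
p in A (w.r.t. the usual order q \<circ> p = p) with \<omega>_\<xi>(x) = \<omega>_\<xi>(p x p) for all x in A.\<close>
definition is_support_projection :: "('a::complex_inner \<Rightarrow> 'a) set \<Rightarrow> 'a \<Rightarrow> ('a \<Rightarrow> 'a) \<Rightarrow> bool" where
  "is_support_projection A \<xi> p \<longleftrightarrow>
     p \<in> A \<and> is_projection p \<and> (\<forall>x\<in>A. omega \<xi> x = omega \<xi> (p \<circ> x \<circ> p)) \<and>
     (\<forall>q. q \<in> A \<and> is_projection q \<and> (\<forall>x\<in>A. omega \<xi> x = omega \<xi> (q \<circ> x \<circ> q))
          \<longrightarrow> q \<circ> p = p)"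

end

theory Submission
  imports Defs "HOL-Analysis.Elementary_Metric_Spaces"
begin

text \<open>Let \<open>M\<close> be the closure of \<open>A' \<xi>\<close> and \<open>q\<close> the orthogonal projection onto \<open>M\<close>. As \<open>M\<close> is
  invariant under the selfadjoint set \<open>A'\<close>, \<open>q\<close> lies in \<open>A'' = A\<close>, and \<open>q \<xi> = \<xi>\<close> makes \<open>q\<close>
  admissible in the definition of the support, so \<open>\<epsilon>\<^sub>A \<le> q\<close>. Conversely \<open>\<epsilon>\<^sub>A \<xi> = \<xi>\<close> and
  \<open>\<epsilon>\<^sub>A\<close> commutes with \<open>A'\<close>, so \<open>\<epsilon>\<^sub>A\<close> fixes \<open>A' \<xi>\<close> and hence \<open>M\<close>: thus \<open>\<epsilon>\<^sub>A = q\<close>.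
  The hypothesis says that \<open>a \<xi> \<in> M\<close> for selfadjoint \<open>a \<in> A\<close>, hence for all \<open>a \<in> A\<close> by
  splitting \<open>a\<close> into real and imaginary parts. Then \<open>a (b \<xi>) = b (a \<xi>) \<in> M\<close> for \<open>b \<in> A'\<close>, so \<open>M\<close>
  is also invariant under the selfadjoint set \<open>A\<close>, and therefore \<open>q \<in> A'\<close>.\<close>

section \<open>Complex inner product spaces\<close>

lemma cinner_zero_left [simp]: "cinner (0::'a::complex_inner) y = 0"
proof -
  have "cinner (0 + 0::'a) y = cinner 0 y + cinner 0 y" by (rule cinner_add_left)
  then show ?thesis by simp
qed

lemma cinner_diff_left: "cinner ((x::'a::complex_inner) - y) z = cinner x z - cinner y z"
proof -
  have "cinner ((x - y) + y) z = cinner (x - y) z + cinner y z" by (rule cinner_add_left)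
  then show ?thesis by simp
qed

lemma cinner_add_right: "cinner (x::'a::complex_inner) (y + z) = cinner x y + cinner x z"
  by (metis cinner_add_left cinner_commute complex_cnj_add)

lemma cinner_diff_right: "cinner (x::'a::complex_inner) (y - z) = cinner x y - cinner x z"
  by (metis cinner_diff_left cinner_commute complex_cnj_diff)

lemma cinner_scaleC_right: "cinner (x::'a::complex_inner) (scaleC c y) = cnj c * cinner x y"
  by (metis cinner_scaleC_left cinner_commute complex_cnj_mult)

lemma cinner_zero_right [simp]: "cinner (x::'a::complex_inner) 0 = 0"
  by (metis cinner_zero_left cinner_commute complex_cnj_zero)

lemma cinner_eq_zero_sym: "cinner (x::'a::complex_inner) y = 0 \<longleftrightarrow> cinner y x = 0"
  by (metis cinner_commute complex_cnj_zero_iff)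

lemma cinner_self_eq_0 [simp]: "cinner (x::'a::complex_inner) x = 0 \<longleftrightarrow> x = 0"
  by (simp add: cinner_self_norm)

lemma of_real_norm_sq: "(complex_of_real (norm (x::'a::complex_inner)))\<^sup>2 = cinner x x"
  by (simp add: cinner_self_norm)

lemma cinner_ext: "(\<And>z. cinner (x::'a::complex_inner) z = cinner y z) \<Longrightarrow> x = y"
  by (metis cinner_diff_left cinner_self_eq_0 eq_iff_diff_eq_0)

lemma scaleC_one [simp]: "scaleC 1 (x::'a::complex_inner) = x"
  by (metis of_real_1 scaleC_of_real scaleR_one)

lemma scaleC_zero_left [simp]: "scaleC 0 (x::'a::complex_inner) = 0"
  by (metis of_real_0 scaleC_of_real scale_zero_left)

lemma scaleC_diff_right: "scaleC c ((x::'a::complex_inner) - y) = scaleC c x - scaleC c y"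
  by (rule cinner_ext) (simp add: cinner_scaleC_left cinner_diff_left algebra_simps)

lemma norm_scaleC: "norm (scaleC c (x::'a::complex_inner)) = cmod c * norm x"
proof -
  have "complex_of_real ((norm (scaleC c x))\<^sup>2) = complex_of_real ((cmod c * norm x)\<^sup>2)"
    by (simp add: of_real_norm_sq cinner_scaleC_left cinner_scaleC_right power_mult_distrib
        complex_norm_square[unfolded of_real_power])
  then show ?thesis
    by (simp only: of_real_eq_iff power2_eq_iff_nonneg norm_ge_zero zero_le_mult_iff) simp
qed

lemma norm_diff_scaleC_sq:
  "complex_of_real ((norm ((x::'a::complex_inner) - scaleC t y))\<^sup>2) =
     of_real ((norm x)\<^sup>2) - cnj t * cinner x y - t * cnj (cinner x y) + t * cnj t * of_real ((norm y)\<^sup>2)"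
  by (simp add: of_real_norm_sq cinner_diff_left cinner_diff_right cinner_scaleC_left
      cinner_scaleC_right cinner_commute[of y x] algebra_simps)

lemma norm_cinner_le: "cmod (cinner (x::'a::complex_inner) y) \<le> norm x * norm y"
proof (cases "y = 0")
  case False
  define N where "N = (norm y)\<^sup>2"
  define w where "w = cinner x y"
  have N: "N > 0" using False by (simp add: N_def)
  have "w * cnj w = complex_of_real ((cmod w)\<^sup>2)"
    by (rule complex_norm_square[symmetric])
  then have "complex_of_real ((norm (x - scaleC (w / of_real N) y))\<^sup>2) =
      of_real ((norm x)\<^sup>2 - (cmod w)\<^sup>2 / N)"
    using N unfolding norm_diff_scaleC_sq w_def[symmetric] N_def[symmetric]
    by (simp add: field_simps)
  then have "(cmod w)\<^sup>2 / N \<le> (norm x)\<^sup>2"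
    by (smt (verit) of_real_eq_iff zero_le_power2)
  then have "(cmod w)\<^sup>2 \<le> (norm x * norm y)\<^sup>2"
    using N by (simp add: N_def field_simps)
  then show ?thesis by (simp add: w_def power2_le_iff_abs_le)
qed simp

lemma norm_add_sq_orthogonal:
  assumes "cinner (x::'a::complex_inner) y = 0"
  shows "(norm (x + y))\<^sup>2 = (norm x)\<^sup>2 + (norm y)\<^sup>2"
proof -
  have "complex_of_real ((norm (x + y))\<^sup>2) = complex_of_real ((norm x)\<^sup>2 + (norm y)\<^sup>2)"
    using assms by (simp add: of_real_norm_sq cinner_add_left cinner_add_right cinner_eq_zero_sym[of x y])
  then show ?thesis by (simp only: of_real_eq_iff)
qed

lemma parallelogram_law:
  "(norm ((x::'a::complex_inner) - y))\<^sup>2 + (norm (x + y))\<^sup>2 = 2 * (norm x)\<^sup>2 + 2 * (norm y)\<^sup>2"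
proof -
  have "complex_of_real ((norm (x - y))\<^sup>2 + (norm (x + y))\<^sup>2) =
      complex_of_real (2 * (norm x)\<^sup>2 + 2 * (norm y)\<^sup>2)"
    by (simp add: of_real_norm_sq cinner_diff_left cinner_diff_right cinner_add_left
        cinner_add_right algebra_simps)
  then show ?thesis by (simp only: of_real_eq_iff)
qed

lemma bounded_linear_scaleC: "bounded_linear (scaleC c :: 'a::complex_inner \<Rightarrow> 'a)"
  by (rule bounded_linear_intro[where K = "cmod c"])
    (simp_all add: scaleC_add_right norm_scaleC scaleC_of_real[symmetric] scaleC_scaleC mult.commute)

lemma bounded_linear_cinner_left: "bounded_linear (\<lambda>x::'a::complex_inner. cinner x y)"
  by (rule bounded_linear_intro[where K = "norm y"])
    (simp_all add: cinner_add_left scaleC_of_real[symmetric] cinner_scaleC_left scaleR_conv_of_real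
      norm_cinner_le)

section \<open>Orthogonal projections onto closed subspaces\<close>

definition csubspace :: "'a::complex_inner set \<Rightarrow> bool" where
  "csubspace M \<longleftrightarrow> 0 \<in> M \<and> (\<forall>x\<in>M. \<forall>y\<in>M. x + y \<in> M) \<and> (\<forall>c. \<forall>x\<in>M. scaleC c x \<in> M)"

lemma csubspace_diff:
  assumes "csubspace M" "x \<in> M" "y \<in> M"
  shows "x - y \<in> M"
proof -
  have "scaleC (-1) y = - y"
    by (rule cinner_ext) (simp add: cinner_scaleC_left cinner_diff_left[of 0, simplified])
  then show ?thesis
    using assms unfolding csubspace_def by (metis diff_conv_add_uminus)
qed

lemma csubspace_closure:
  assumes "csubspace M"
  shows "csubspace (closure M)"
  unfolding csubspace_def
proof (intro conjI ballI allI)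
  show "0 \<in> closure M"
    using assms closure_subset unfolding csubspace_def by blast
next
  fix x y assume "x \<in> closure M" "y \<in> closure M"
  then obtain X Y where "\<forall>n. X n \<in> M" "X \<longlonglongrightarrow> x" "\<forall>n. Y n \<in> M" "Y \<longlonglongrightarrow> y"
    unfolding closure_sequential by blast
  moreover from this have "\<forall>n. X n + Y n \<in> M"
    using assms unfolding csubspace_def by blast
  ultimately show "x + y \<in> closure M"
    unfolding closure_sequential by (auto intro!: exI[where x = "\<lambda>n. X n + Y n"] tendsto_add)
next
  fix c x assume "x \<in> closure M"
  then obtain X where "\<forall>n. X n \<in> M" "X \<longlonglongrightarrow> x"
    unfolding closure_sequential by blast
  moreover from this have "\<forall>n. scaleC c (X n) \<in> M"
    using assms unfolding csubspace_def by blast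
  ultimately show "scaleC c x \<in> closure M"
    unfolding closure_sequential
    by (auto intro!: exI[where x = "\<lambda>n. scaleC c (X n)"] bounded_linear.tendsto[OF bounded_linear_scaleC])
qed

lemma parallelogram_midpoint_bound:
  fixes x y z :: "'a::complex_inner"
  assumes "d \<le> norm (x - scaleR (1/2) (y + z))" "0 \<le> d"
  shows "(norm (y - z))\<^sup>2 \<le> 2 * (norm (x - y))\<^sup>2 + 2 * (norm (x - z))\<^sup>2 - 4 * d\<^sup>2"
proof -
  have "(x - y) + (x - z) = scaleR 2 (x - scaleR (1/2) (y + z))"
    by (simp add: algebra_simps scaleR_2)
  then have "(norm ((x - y) + (x - z)))\<^sup>2 = 4 * (norm (x - scaleR (1/2) (y + z)))\<^sup>2"
    by (simp add: power_mult_distrib)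
  moreover have "4 * d\<^sup>2 \<le> 4 * (norm (x - scaleR (1/2) (y + z)))\<^sup>2"
    using assms by (simp add: power_mono)
  moreover have "(x - y) - (x - z) = z - y" by simp
  ultimately show ?thesis
    using parallelogram_law[of "x - y" "x - z"] by (simp add: norm_minus_commute)
qed

lemma minimizing_sequence_Cauchy:
  fixes x :: "'a::complex_inner"
  assumes M: "csubspace M" and d: "\<forall>n\<in>M. d \<le> norm (x - n)" "0 \<le> d"
    and ms: "\<forall>k. ms k \<in> M" "\<forall>k. (norm (x - ms k))\<^sup>2 \<le> d\<^sup>2 + inverse (real (Suc k))"
  shows "Cauchy ms"
  unfolding Cauchy_def
proof (intro allI impI)
  fix e :: real assume "e > 0"
  then obtain N where "inverse (real (Suc N)) < e\<^sup>2 / 4"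
    using reals_Archimedean by (metis divide_pos_pos zero_less_numeral zero_less_power)
  then have N: "4 * inverse (real (Suc N)) < e\<^sup>2" by simp
  have "dist (ms j) (ms k) < e" if "N \<le> j" "N \<le> k" for j k
  proof -
    have "scaleR (1/2) (ms j + ms k) \<in> M"
      using M ms(1) unfolding csubspace_def scaleC_of_real[symmetric] by blast
    then have "(norm (ms j - ms k))\<^sup>2 \<le> 2 * inverse (real (Suc j)) + 2 * inverse (real (Suc k))"
      using parallelogram_midpoint_bound[of d x "ms j" "ms k"] d ms(2)[rule_format, of j]
        ms(2)[rule_format, of k] by force
    also have "\<dots> \<le> 4 * inverse (real (Suc N))"
    proof -
      have "inverse (real (Suc i)) \<le> inverse (real (Suc N))" if "N \<le> i" for i
        using that by (simp add: le_imp_inverse_le)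
      then show ?thesis using that by (smt (verit))
    qed
    finally have "(dist (ms j) (ms k))\<^sup>2 < e\<^sup>2"
      using N by (simp add: dist_norm)
    then show ?thesis
      using \<open>e > 0\<close> by (simp add: power_less_imp_less_base)
  qed
  then show "\<exists>N. \<forall>j\<ge>N. \<forall>k\<ge>N. dist (ms j) (ms k) < e" by blast
qed

lemma nearest_point_exists:
  fixes x :: "'a::chilbert"
  assumes M: "csubspace M" "closed M"
  shows "\<exists>m\<in>M. \<forall>n\<in>M. norm (x - m) \<le> norm (x - n)"
proof -
  define d where "d = Inf ((\<lambda>n. norm (x - n)) ` M)"
  have "M \<noteq> {}" using M unfolding csubspace_def by blast
  moreover have "bdd_below ((\<lambda>n. norm (x - n)) ` M)"
    by (rule bdd_belowI[where m = 0]) auto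
  ultimately have d: "\<forall>n\<in>M. d \<le> norm (x - n)" "0 \<le> d"
    unfolding d_def by (auto intro: cInf_lower cInf_greatest)
  have "\<exists>m\<in>M. (norm (x - m))\<^sup>2 \<le> d\<^sup>2 + inverse (real (Suc k))" for k
  proof -
    define r where "r = sqrt (d\<^sup>2 + inverse (real (Suc k)))"
    have "d < r"
      using d(2) by (simp add: r_def real_less_rsqrt)
    then obtain m where "m \<in> M" "norm (x - m) < r"
      using cInf_lessD[of "(\<lambda>n. norm (x - n)) ` M"] \<open>M \<noteq> {}\<close> unfolding d_def by auto
    moreover from this have "(norm (x - m))\<^sup>2 \<le> r\<^sup>2"
      by (simp add: power_mono)
    ultimately show ?thesis
      by (auto simp: r_def)
  qed
  then obtain ms where ms: "\<forall>k. ms k \<in> M" "\<forall>k. (norm (x - ms k))\<^sup>2 \<le> d\<^sup>2 + inverse (real (Suc k))"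
    by metis
  obtain m where m: "ms \<longlonglongrightarrow> m"
    using minimizing_sequence_Cauchy[OF M(1) d ms] Cauchy_convergent_iff convergent_def by blast
  have "m \<in> M"
    using closed_sequentially[OF M(2)] ms(1) m by blast
  moreover have "(\<lambda>k. (norm (x - ms k))\<^sup>2) \<longlonglongrightarrow> (norm (x - m))\<^sup>2"
    using m by (intro tendsto_intros)
  then have "(norm (x - m))\<^sup>2 \<le> d\<^sup>2"
    by (rule LIMSEQ_le[OF _ LIMSEQ_inverse_real_of_nat_add]) (use ms(2) in auto)
  then have "norm (x - m) \<le> d"
    using d(2) by (simp add: power2_le_iff_abs_le)
  ultimately show ?thesis
    using d(1) by force
qed

text \<open>Moving from a nearest point \<open>m\<close> towards \<open>n\<close> by the small step \<open>s \<langle>x - m, n\<rangle> n\<close>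
  would decrease the distance to \<open>x\<close> unless \<open>\<langle>x - m, n\<rangle> = 0\<close>.\<close>
lemma nearest_point_orthogonal:
  fixes x :: "'a::complex_inner"
  assumes M: "csubspace M" and m: "m \<in> M" "\<forall>n\<in>M. norm (x - m) \<le> norm (x - n)" and n: "n \<in> M"
  shows "cinner (x - m) n = 0"
proof (rule ccontr)
  define c where "c = cinner (x - m) n"
  define s where "s = inverse ((norm n)\<^sup>2 + 1)"
  assume "cinner (x - m) n \<noteq> 0"
  then have "s * (cmod c)\<^sup>2 > 0"
    by (intro mult_pos_pos) (simp_all add: c_def s_def add_nonneg_pos)
  have "m + scaleC (of_real s * c) n \<in> M"
    using M m n unfolding csubspace_def by blast
  then have "(norm (x - m))\<^sup>2 \<le> (norm ((x - m) - scaleC (of_real s * c) n))\<^sup>2"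
    using m by (simp add: power_mono algebra_simps)
  also have "\<dots> = (norm (x - m))\<^sup>2 - s * (cmod c)\<^sup>2 * (2 - s * (norm n)\<^sup>2)"
  proof -
    have "complex_of_real ((norm ((x - m) - scaleC (of_real s * c) n))\<^sup>2) =
        of_real ((norm (x - m))\<^sup>2) - of_real s * (c * cnj c) * (2 - of_real s * of_real ((norm n)\<^sup>2))"
      unfolding norm_diff_scaleC_sq c_def[symmetric] by (simp add: algebra_simps)
    also have "\<dots> = of_real ((norm (x - m))\<^sup>2 - s * (cmod c)\<^sup>2 * (2 - s * (norm n)\<^sup>2))"
      by (simp add: complex_norm_square[symmetric])
    finally show ?thesis by (simp only: of_real_eq_iff)
  qed
  finally have "s * (cmod c)\<^sup>2 * (2 - s * (norm n)\<^sup>2) \<le> 0"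
    by simp
  then have "2 \<le> s * (norm n)\<^sup>2"
    using \<open>s * (cmod c)\<^sup>2 > 0\<close> mult_pos_pos[of "s * (cmod c)\<^sup>2" "2 - s * (norm n)\<^sup>2"]
    by linarith
  moreover have "s * (norm n)\<^sup>2 < 1"
    by (simp add: s_def field_simps add_pos_nonneg)
  ultimately show False by simp
qed

lemma orthogonal_projection_exists:
  fixes x :: "'a::chilbert"
  assumes "csubspace M" "closed M"
  shows "\<exists>m\<in>M. \<forall>n\<in>M. cinner (x - m) n = 0"
  using nearest_point_exists[OF assms] nearest_point_orthogonal[OF assms(1)] by blast

definition orth_proj :: "'a::chilbert set \<Rightarrow> 'a \<Rightarrow> 'a" where
  "orth_proj M x = (SOME m. m \<in> M \<and> (\<forall>n\<in>M. cinner (x - m) n = 0))"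

context
  fixes M :: "'a::chilbert set"
  assumes M: "csubspace M" "closed M"
begin

lemma orth_proj_in: "orth_proj M x \<in> M"
  and orth_proj_orthogonal: "n \<in> M \<Longrightarrow> cinner (x - orth_proj M x) n = 0"
proof -
  have "\<exists>m. m \<in> M \<and> (\<forall>n\<in>M. cinner (x - m) n = 0)"
    using orthogonal_projection_exists[OF M] by blast
  from someI_ex[OF this] show "orth_proj M x \<in> M" "n \<in> M \<Longrightarrow> cinner (x - orth_proj M x) n = 0"
    unfolding orth_proj_def by auto
qed

lemma orth_proj_unique:
  assumes m: "m \<in> M" "\<forall>n\<in>M. cinner (x - m) n = 0"
  shows "orth_proj M x = m"
proof -
  define d where "d = orth_proj M x - m"
  have "d \<in> M"
    unfolding d_def using csubspace_diff[OF M(1) orth_proj_in m(1)] .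
  moreover have "d = (x - m) - (x - orth_proj M x)"
    by (simp add: d_def)
  ultimately have "cinner d d = 0"
    using m orth_proj_orthogonal by (metis cinner_diff_left diff_self)
  then show ?thesis by (simp add: d_def)
qed

lemma orth_proj_id: "x \<in> M \<Longrightarrow> orth_proj M x = x"
  by (rule orth_proj_unique) simp_all

lemma orth_proj_idem: "orth_proj M \<circ> orth_proj M = orth_proj M"
  by (rule ext) (simp add: orth_proj_id orth_proj_in)

lemma is_adjoint_orth_proj: "is_adjoint (orth_proj M) (orth_proj M)"
  unfolding is_adjoint_def
proof (intro allI)
  fix x y
  let ?P = "orth_proj M"
  have "cinner (?P x) (y - ?P y) = 0"
    using orth_proj_orthogonal[OF orth_proj_in, of y x] cinner_eq_zero_sym by blast
  then have "cinner (?P x) y = cinner (?P x) (?P y)"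
    by (simp add: cinner_diff_right)
  also have "\<dots> = cinner x (?P y)"
    using orth_proj_orthogonal[OF orth_proj_in, of x y] by (simp add: cinner_diff_left)
  finally show "cinner (?P x) y = cinner x (?P y)" .
qed

lemma bounded_op_orth_proj: "bounded_op (orth_proj M)"
proof -
  let ?P = "orth_proj M"
  have "?P (x + y) = ?P x + ?P y" for x y
  proof (rule orth_proj_unique)
    show "?P x + ?P y \<in> M"
      using M(1) orth_proj_in unfolding csubspace_def by blast
    have eq: "x + y - (?P x + ?P y) = (x - ?P x) + (y - ?P y)" by simp
    show "\<forall>n\<in>M. cinner (x + y - (?P x + ?P y)) n = 0"
      unfolding eq by (simp add: cinner_add_left orth_proj_orthogonal)
  qed
  moreover have "?P (scaleC c x) = scaleC c (?P x)" for c x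
    using M orth_proj_in orth_proj_orthogonal unfolding csubspace_def
    by (intro orth_proj_unique) (auto simp: scaleC_diff_right[symmetric] cinner_scaleC_left)
  moreover have "norm (?P x) \<le> 1 * norm x" for x
  proof -
    have "(norm (?P x + (x - ?P x)))\<^sup>2 = (norm (?P x))\<^sup>2 + (norm (x - ?P x))\<^sup>2"
      using orth_proj_orthogonal[OF orth_proj_in, of x]
      by (intro norm_add_sq_orthogonal) (simp add: cinner_eq_zero_sym)
    then have "(norm (?P x))\<^sup>2 \<le> (norm x)\<^sup>2" by simp
    then show ?thesis by (simp add: power2_le_iff_abs_le)
  qed
  ultimately show ?thesis
    unfolding bounded_op_def clinear_def by blast
qed

lemma orth_proj_eqI:
  assumes P: "is_adjoint P P" "\<And>x. P x \<in> M" "\<And>m. m \<in> M \<Longrightarrow> P m = m"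
  shows "orth_proj M = P"
proof
  fix x
  have "cinner (x - P x) n = 0" if "n \<in> M" for n
    using P that unfolding is_adjoint_def by (simp add: cinner_diff_left)
  then show "orth_proj M x = P x"
    using orth_proj_unique P(2) by blast
qed

end

section \<open>Bounded operators and adjoints\<close>

lemma clinear_diff: "clinear T \<Longrightarrow> T (x - y) = T x - T y"
  unfolding clinear_def by (metis add_diff_cancel diff_add_cancel)

lemma bounded_op_bounded_linear:
  assumes "bounded_op T"
  shows "bounded_linear T"
proof -
  obtain K where "clinear T" "\<forall>x. norm (T x) \<le> K * norm x"
    using assms unfolding bounded_op_def by blast
  then show ?thesis
    unfolding clinear_def
    by (intro bounded_linear_intro[where K = K]) (simp_all add: scaleC_of_real[symmetric] mult.commute)
qed

lemma bounded_op_continuous: "bounded_op T \<Longrightarrow> continuous_on UNIV T"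
  using bounded_linear.continuous_on[OF bounded_op_bounded_linear continuous_on_id] by simp

lemma bounded_op_image_closure_subset:
  assumes "bounded_op T" "T ` S \<subseteq> C" "closed C"
  shows "T ` closure S \<subseteq> C"
proof -
  have "closed (T -` C)"
    using assms(1,3) by (intro closed_vimage bounded_op_continuous)
  then have "closure S \<subseteq> T -` C"
    using assms(2) by (intro closure_minimal) auto
  then show ?thesis by blast
qed

lemma bounded_op_id: "bounded_op (id :: 'a::complex_inner \<Rightarrow> 'a)"
  unfolding bounded_op_def clinear_def by (auto intro: exI[of _ 1])

lemma bounded_op_lincomb:
  assumes "bounded_op T1" "bounded_op T2"
  shows "bounded_op (\<lambda>x. scaleC c1 (T1 x) + scaleC c2 (T2 x))"
proof -
  obtain K1 K2 where K: "\<forall>x. norm (T1 x) \<le> K1 * norm x" "\<forall>x. norm (T2 x) \<le> K2 * norm x"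
    using assms unfolding bounded_op_def by blast
  have "norm (scaleC c1 (T1 x) + scaleC c2 (T2 x)) \<le> (cmod c1 * K1 + cmod c2 * K2) * norm x" for x
  proof -
    have "norm (scaleC c1 (T1 x) + scaleC c2 (T2 x)) \<le> cmod c1 * norm (T1 x) + cmod c2 * norm (T2 x)"
      using norm_triangle_ineq[of "scaleC c1 (T1 x)" "scaleC c2 (T2 x)"] by (simp add: norm_scaleC)
    also have "\<dots> \<le> cmod c1 * (K1 * norm x) + cmod c2 * (K2 * norm x)"
      using K by (intro add_mono mult_left_mono) auto
    finally show ?thesis by (simp add: algebra_simps)
  qed
  moreover have "clinear (\<lambda>x. scaleC c1 (T1 x) + scaleC c2 (T2 x))"
    using assms unfolding bounded_op_def clinear_def
    by (simp add: scaleC_add_right scaleC_scaleC mult.commute add_ac)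
  ultimately show ?thesis
    unfolding bounded_op_def by blast
qed

lemma bounded_op_comp:
  assumes "bounded_op T1" "bounded_op T2"
  shows "bounded_op (T1 \<circ> T2)"
proof -
  obtain K1 K2 where K: "\<forall>x. norm (T1 x) \<le> K1 * norm x" "\<forall>x. norm (T2 x) \<le> K2 * norm x"
    using assms unfolding bounded_op_def by blast
  have "norm (T1 (T2 x)) \<le> (\<bar>K1\<bar> * \<bar>K2\<bar>) * norm x" for x
  proof -
    have "norm (T1 (T2 x)) \<le> \<bar>K1\<bar> * norm (T2 x)"
      using K(1) by (smt (verit) mult_right_mono norm_ge_zero)
    also have "\<dots> \<le> \<bar>K1\<bar> * (\<bar>K2\<bar> * norm x)"
      using K(2) by (smt (verit) mult_left_mono mult_right_mono norm_ge_zero abs_ge_zero)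
    finally show ?thesis by (simp add: mult.assoc)
  qed
  moreover have "clinear (T1 \<circ> T2)"
    using assms unfolding bounded_op_def clinear_def by simp
  ultimately show ?thesis
    unfolding bounded_op_def by auto
qed

lemma riesz_representation:
  fixes f :: "'a::chilbert \<Rightarrow> complex"
  assumes add: "\<And>x y. f (x + y) = f x + f y" and hom: "\<And>c x. f (scaleC c x) = c * f x"
    and closed: "closed {x. f x = 0}"
  shows "\<exists>z. \<forall>x. f x = cinner x z"
proof (cases "\<forall>x. f x = 0")
  case False
  then obtain x0 where fx0: "f x0 \<noteq> 0" by blast
  have diff: "f (x - y) = f x - f y" for x y
    using add[of "x - y" y] by simp
  define K where "K = {x. f x = 0}"
  have "csubspace K"
    unfolding csubspace_def K_def using add hom diff[of 0 0] by simp
  then obtain m where m: "m \<in> K" "\<forall>n\<in>K. cinner (x0 - m) n = 0"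
    using orthogonal_projection_exists closed unfolding K_def by blast
  define z0 where "z0 = x0 - m"
  have fz0: "f z0 = f x0"
    using m(1) by (simp add: z0_def diff K_def)
  then have "cinner z0 z0 \<noteq> 0"
    using fx0 diff[of 0 0] by auto
  have "f x = cinner x (scaleC (cnj (f z0 / cinner z0 z0)) z0)" for x
  proof -
    have "f (scaleC (f x) z0 - scaleC (f z0) x) = 0"
      by (simp add: diff hom)
    then have "cinner (scaleC (f x) z0 - scaleC (f z0) x) z0 = 0"
      using m(2) cinner_eq_zero_sym unfolding K_def z0_def by blast
    then have "f x * cinner z0 z0 = f z0 * cinner x z0"
      by (simp add: cinner_diff_left cinner_scaleC_left)
    then show ?thesis
      using \<open>cinner z0 z0 \<noteq> 0\<close> by (simp add: cinner_scaleC_right field_simps)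
  qed
  then show ?thesis by blast
qed (auto intro: exI[of _ 0])

lemma adjoint_exists:
  fixes T :: "'a::chilbert \<Rightarrow> 'a"
  assumes "bounded_op T"
  shows "\<exists>S. is_adjoint T S"
proof -
  have "\<exists>z. \<forall>x. cinner (T x) y = cinner x z" for y
  proof (rule riesz_representation)
    show "cinner (T (x + x')) y = cinner (T x) y + cinner (T x') y"
      and "cinner (T (scaleC c x)) y = c * cinner (T x) y" for x x' c
      using assms unfolding bounded_op_def clinear_def
      by (simp_all add: cinner_add_left cinner_scaleC_left)
    have "bounded_linear (\<lambda>x. cinner (T x) y)"
      using bounded_linear_compose[OF bounded_linear_cinner_left bounded_op_bounded_linear[OF assms]] .
    then show "closed {x. cinner (T x) y = 0}"
      by (intro closed_Collect_eq continuous_on_const bounded_linear.continuous_on[OF _ continuous_on_id])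
  qed
  then obtain S where "\<forall>y x. cinner (T x) y = cinner x (S y)"
    by metis
  then show ?thesis
    unfolding is_adjoint_def by blast
qed

lemma is_adjoint_adj: "bounded_op (T::'a::chilbert \<Rightarrow> 'a) \<Longrightarrow> is_adjoint T (adj T)"
  unfolding adj_def using adjoint_exists someI_ex by metis

lemma is_adjoint_sym: "is_adjoint T S \<Longrightarrow> is_adjoint S T"
  unfolding is_adjoint_def by (metis cinner_commute)

lemma adjoint_unique:
  assumes "is_adjoint T S1" "is_adjoint T S2"
  shows "S1 = S2"
proof
  fix y
  have "cinner (S1 y) z = cinner (S2 y) z" for z
    using assms is_adjoint_sym unfolding is_adjoint_def by metis
  then show "S1 y = S2 y" by (rule cinner_ext)
qed

lemma adj_eqI: "is_adjoint T S \<Longrightarrow> adj T = S"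
  unfolding adj_def using adjoint_unique someI by metis

lemma is_adjoint_lincomb_adjoint:
  assumes "is_adjoint a s"
  shows "is_adjoint (\<lambda>x. scaleC c (a x) + scaleC (cnj c) (s x)) (\<lambda>x. scaleC c (a x) + scaleC (cnj c) (s x))"
  using assms is_adjoint_sym[OF assms] unfolding is_adjoint_def
  by (simp add: cinner_add_left cinner_add_right cinner_scaleC_left cinner_scaleC_right algebra_simps)

lemma is_adjoint_projection:
  "is_projection (P::'a::chilbert \<Rightarrow> 'a) \<Longrightarrow> is_adjoint P P"
  unfolding is_projection_def using is_adjoint_adj by metis

lemma bounded_op_adjoint:
  assumes T: "bounded_op T" and TS: "is_adjoint T S"
  shows "bounded_op S"
proof -
  have ST: "\<And>x y. cinner (S x) y = cinner x (T y)"
    using is_adjoint_sym[OF TS] unfolding is_adjoint_def by blast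
  obtain K where K: "\<forall>x. norm (T x) \<le> K * norm x"
    using T unfolding bounded_op_def by blast
  have "clinear S"
    unfolding clinear_def
    by (intro conjI allI; rule cinner_ext) (simp_all add: ST cinner_add_left cinner_scaleC_left)
  moreover have "norm (S y) \<le> K * norm y" for y
  proof -
    have "complex_of_real ((norm (S y))\<^sup>2) = cinner y (T (S y))"
      by (simp only: cinner_self_norm[symmetric] ST)
    then have "(norm (S y))\<^sup>2 = Re (cinner y (T (S y)))"
      by (metis Re_complex_of_real)
    also have "\<dots> \<le> norm y * norm (T (S y))"
      using complex_Re_le_cmod norm_cinner_le order_trans by blast
    also have "\<dots> \<le> norm y * (K * norm (S y))"
      using K by (simp add: mult_left_mono)
    finally have "norm (S y) * norm (S y) \<le> (K * norm y) * norm (S y)"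
      by (simp add: power2_eq_square algebra_simps)
    moreover have "0 \<le> K * norm y"
      using K norm_ge_zero order_trans by blast
    ultimately show ?thesis
      by (metis mult_right_le_imp_le norm_ge_zero order_le_less)
  qed
  ultimately show ?thesis
    unfolding bounded_op_def by blast
qed

lemma is_projection_orth_proj:
  "csubspace M \<Longrightarrow> closed M \<Longrightarrow> is_projection (orth_proj M)"
  unfolding is_projection_def
  by (simp add: bounded_op_orth_proj orth_proj_idem adj_eqI[OF is_adjoint_orth_proj])

section \<open>Commutants and cyclic subspaces\<close>

definition selfadjoint_set :: "('a::chilbert \<Rightarrow> 'a) set \<Rightarrow> bool" where
  "selfadjoint_set X \<longleftrightarrow> (\<forall>S\<in>X. bounded_op S \<and> adj S \<in> X)"

lemma selfadjoint_set_von_neumann_algebra: "von_neumann_algebra A \<Longrightarrow> selfadjoint_set A"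
  unfolding von_neumann_algebra_def selfadjoint_set_def by blast

lemma commutantI:
  assumes "bounded_op T" "\<And>S x. S \<in> X \<Longrightarrow> T (S x) = S (T x)"
  shows "T \<in> commutant X"
  using assms unfolding commutant_def by (simp add: fun_eq_iff)

lemma commutantD:
  assumes "T \<in> commutant X" "S \<in> X"
  shows "T (S x) = S (T x)"
proof -
  have "T \<circ> S = S \<circ> T"
    using assms unfolding commutant_def by blast
  then show ?thesis
    unfolding fun_eq_iff by simp
qed

lemma bounded_op_commutant: "T \<in> commutant X \<Longrightarrow> bounded_op T"
  unfolding commutant_def by blast

lemma id_in_commutant: "id \<in> commutant X"
  by (intro commutantI bounded_op_id) simp

lemma commutant_lincomb:
  assumes X: "\<forall>S\<in>X. bounded_op S" and T: "T1 \<in> commutant X" "T2 \<in> commutant X"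
  shows "(\<lambda>x. scaleC c1 (T1 x) + scaleC c2 (T2 x)) \<in> commutant X"
proof (rule commutantI)
  show "bounded_op (\<lambda>x. scaleC c1 (T1 x) + scaleC c2 (T2 x))"
    using T by (intro bounded_op_lincomb bounded_op_commutant)
  fix S x assume "S \<in> X"
  then have "clinear S"
    using X unfolding bounded_op_def by blast
  then show "scaleC c1 (T1 (S x)) + scaleC c2 (T2 (S x)) = S (scaleC c1 (T1 x) + scaleC c2 (T2 x))"
    using commutantD[OF T(1) \<open>S \<in> X\<close>] commutantD[OF T(2) \<open>S \<in> X\<close>]
    unfolding clinear_def by simp
qed

lemma commutant_comp:
  assumes "T1 \<in> commutant X" "T2 \<in> commutant X"
  shows "T1 \<circ> T2 \<in> commutant X"
proof (rule commutantI)
  show "bounded_op (T1 \<circ> T2)"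
    using assms by (intro bounded_op_comp bounded_op_commutant)
  fix S x assume "S \<in> X"
  then show "(T1 \<circ> T2) (S x) = S ((T1 \<circ> T2) x)"
    using commutantD[OF assms(1)] commutantD[OF assms(2)] by simp
qed

lemma adj_in_commutant:
  assumes X: "selfadjoint_set X" and b: "b \<in> commutant X"
  shows "adj b \<in> commutant X"
proof (rule commutantI)
  have bb: "bounded_op b"
    using b by (rule bounded_op_commutant)
  then show "bounded_op (adj b)"
    using bounded_op_adjoint is_adjoint_adj by blast
  fix T x assume T: "T \<in> X"
  have adj_b: "\<And>x y. cinner (adj b x) y = cinner x (b y)"
    using is_adjoint_sym[OF is_adjoint_adj[OF bb]] unfolding is_adjoint_def by blast
  have adj_T: "\<And>x y. cinner (T x) y = cinner x (adj T y)" and "adj T \<in> X"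
    using X T is_adjoint_adj unfolding selfadjoint_set_def is_adjoint_def by blast+
  show "adj b (T x) = T (adj b x)"
    by (rule cinner_ext) (simp add: adj_b adj_T commutantD[OF b \<open>adj T \<in> X\<close>])
qed

lemma selfadjoint_set_commutant: "selfadjoint_set X \<Longrightarrow> selfadjoint_set (commutant X)"
  unfolding selfadjoint_set_def[of "commutant X"]
  using adj_in_commutant commutant_def by blast

text \<open>\<open>S (x - P x) \<bottom> M\<close> because \<open>adj S\<close> also maps \<open>M\<close> into itself; hence \<open>P (S x) = S (P x)\<close>.\<close>
lemma orth_proj_in_commutant:
  assumes M: "csubspace M" "closed M" and X: "selfadjoint_set X"
    and invariant: "\<forall>S\<in>X. S ` M \<subseteq> M"
  shows "orth_proj M \<in> commutant X"
proof -
  have "orth_proj M (S x) = S (orth_proj M x)" if S: "S \<in> X" for S x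
  proof (rule orth_proj_unique[OF M])
    show "S (orth_proj M x) \<in> M"
      using S invariant orth_proj_in[OF M] by blast
    have "clinear S" "is_adjoint S (adj S)" "adj S \<in> X"
      using S X is_adjoint_adj unfolding selfadjoint_set_def bounded_op_def by blast+
    then have "cinner (S x - S (orth_proj M x)) n = cinner (x - orth_proj M x) (adj S n)" for n
      by (simp add: clinear_diff[symmetric] is_adjoint_def)
    moreover have "adj S n \<in> M" if "n \<in> M" for n
      using that \<open>adj S \<in> X\<close> invariant by blast
    ultimately show "\<forall>n\<in>M. cinner (S x - S (orth_proj M x)) n = 0"
      by (simp add: orth_proj_orthogonal[OF M])
  qed
  then show ?thesis
    using bounded_op_orth_proj[OF M] by (intro commutantI) simp_all
qed

definition cyclic_subspace :: "('a::complex_inner \<Rightarrow> 'a) set \<Rightarrow> 'a \<Rightarrow> 'a set" where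
  "cyclic_subspace X \<xi> = closure ((\<lambda>T. T \<xi>) ` X)"

lemma in_cyclic_subspace: "T \<in> X \<Longrightarrow> T \<xi> \<in> cyclic_subspace X \<xi>"
  unfolding cyclic_subspace_def by (rule closure_subset[THEN subsetD, OF imageI])

lemma closed_cyclic_subspace: "closed (cyclic_subspace X \<xi>)"
  unfolding cyclic_subspace_def by simp

lemma csubspace_cyclic_subspace_commutant:
  assumes "\<forall>S\<in>Y. bounded_op S"
  shows "csubspace (cyclic_subspace (commutant Y) \<xi>)"
  unfolding cyclic_subspace_def
proof (rule csubspace_closure)
  have lincomb: "scaleC c1 (T1 \<xi>) + scaleC c2 (T2 \<xi>) \<in> (\<lambda>T. T \<xi>) ` commutant Y"
    if "T1 \<in> commutant Y" "T2 \<in> commutant Y" for c1 c2 T1 T2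
    using commutant_lincomb[OF assms that, of c1 c2] by (rule rev_image_eqI) simp
  show "csubspace ((\<lambda>T. T \<xi>) ` commutant Y)"
    unfolding csubspace_def
  proof (intro conjI ballI allI)
    show "0 \<in> (\<lambda>T. T \<xi>) ` commutant Y"
      using lincomb[of id id 0 0] by (simp add: id_in_commutant)
  next
    fix u v assume "u \<in> (\<lambda>T. T \<xi>) ` commutant Y" "v \<in> (\<lambda>T. T \<xi>) ` commutant Y"
    then obtain T1 T2 where "T1 \<in> commutant Y" "T2 \<in> commutant Y" "u = T1 \<xi>" "v = T2 \<xi>"
      by blast
    then show "u + v \<in> (\<lambda>T. T \<xi>) ` commutant Y"
      using lincomb[of T1 T2 1 1] by simp
  next
    fix c u assume "u \<in> (\<lambda>T. T \<xi>) ` commutant Y"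
    then obtain T where "T \<in> commutant Y" "u = T \<xi>"
      by blast
    then show "scaleC c u \<in> (\<lambda>T. T \<xi>) ` commutant Y"
      using lincomb[of T id c 0] by (simp add: id_in_commutant)
  qed
qed

lemma cyclic_subspace_invariantI:
  assumes "bounded_op a" "\<And>T. T \<in> X \<Longrightarrow> a (T \<xi>) \<in> cyclic_subspace X \<xi>"
  shows "a ` cyclic_subspace X \<xi> \<subseteq> cyclic_subspace X \<xi>"
proof -
  have "a ` ((\<lambda>T. T \<xi>) ` X) \<subseteq> cyclic_subspace X \<xi>"
    using assms(2) by blast
  from bounded_op_image_closure_subset[OF assms(1) this closed_cyclic_subspace]
  show ?thesis by (simp only: cyclic_subspace_def)
qed

lemma cyclic_subspace_commutant_invariant:
  assumes b: "b \<in> commutant Y"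
  shows "b ` cyclic_subspace (commutant Y) \<xi> \<subseteq> cyclic_subspace (commutant Y) \<xi>"
proof (rule cyclic_subspace_invariantI)
  show "bounded_op b"
    using b by (rule bounded_op_commutant)
  fix T assume "T \<in> commutant Y"
  from in_cyclic_subspace[OF commutant_comp[OF b this]]
  show "b (T \<xi>) \<in> cyclic_subspace (commutant Y) \<xi>" by simp
qed

lemma cyclic_subspace_bicommutant_invariant:
  assumes a: "a \<in> commutant (commutant Y)" and a_\<xi>: "a \<xi> \<in> cyclic_subspace (commutant Y) \<xi>"
  shows "a ` cyclic_subspace (commutant Y) \<xi> \<subseteq> cyclic_subspace (commutant Y) \<xi>"
proof (rule cyclic_subspace_invariantI)
  show "bounded_op a"
    using a by (rule bounded_op_commutant)
  fix T assume T: "T \<in> commutant Y"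
  have "T (a \<xi>) \<in> cyclic_subspace (commutant Y) \<xi>"
    using cyclic_subspace_commutant_invariant[OF T] a_\<xi> by blast
  then show "a (T \<xi>) \<in> cyclic_subspace (commutant Y) \<xi>"
    by (simp only: commutantD[OF a T])
qed

section \<open>The support projection of a vector state\<close>

lemma omega_compress:
  assumes "is_adjoint q q" "q \<xi> = \<xi>"
  shows "omega \<xi> x = omega \<xi> (q \<circ> x \<circ> q)"
  using assms unfolding omega_def is_adjoint_def by simp

lemma support_projection_fixes_vector:
  fixes A :: "('a::chilbert \<Rightarrow> 'a) set"
  assumes e: "is_support_projection A \<xi> e" and "id \<in> A"
  shows "e \<xi> = \<xi>"
proof -
  have proj: "is_projection e" and omega_id: "omega \<xi> id = omega \<xi> (e \<circ> id \<circ> e)"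
    using assms unfolding is_support_projection_def by blast+
  have adj: "\<And>x y. cinner (e x) y = cinner x (e y)"
    using is_adjoint_projection[OF proj] unfolding is_adjoint_def by blast
  have "e \<circ> e = e"
    using proj unfolding is_projection_def by blast
  then have idem: "e (e x) = e x" for x
    by (metis comp_apply)
  have "cinner (\<xi> - e \<xi>) (\<xi> - e \<xi>) = cinner \<xi> \<xi> - cinner (e \<xi>) \<xi>"
    by (simp add: cinner_diff_left cinner_diff_right adj idem)
  also have "\<dots> = 0"
    using omega_id by (simp add: omega_def adj idem)
  finally show ?thesis by simp
qed

lemma cyclic_subspace_fixed:
  assumes e: "e \<in> commutant X" "e \<xi> = \<xi>" and m: "m \<in> cyclic_subspace X \<xi>"
  shows "e m = m"
proof -
  have "(\<lambda>T. T \<xi>) ` X \<subseteq> {x. e x = x}"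
    using commutantD[OF e(1)] e(2) by auto
  moreover have "closed {x. e x = x}"
    using bounded_op_continuous[OF bounded_op_commutant[OF e(1)]]
    by (intro closed_Collect_eq continuous_on_id)
  ultimately have "cyclic_subspace X \<xi> \<subseteq> {x. e x = x}"
    unfolding cyclic_subspace_def by (rule closure_minimal)
  then show ?thesis using m by blast
qed

lemma orth_proj_cyclic_subspace_in_bicommutant:
  assumes "selfadjoint_set Y"
  shows "orth_proj (cyclic_subspace (commutant Y) \<xi>) \<in> commutant (commutant Y)"
proof (rule orth_proj_in_commutant)
  show "csubspace (cyclic_subspace (commutant Y) \<xi>)"
    using assms unfolding selfadjoint_set_def by (intro csubspace_cyclic_subspace_commutant) blast
qed (use assms in \<open>simp_all add: closed_cyclic_subspace selfadjoint_set_commutant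
    cyclic_subspace_commutant_invariant\<close>)

lemma support_projection_eq_orth_proj:
  fixes A :: "('a::chilbert \<Rightarrow> 'a) set"
  assumes A: "von_neumann_algebra A" and e: "is_support_projection A \<xi> e"
  shows "e = orth_proj (cyclic_subspace (commutant A) \<xi>)"
proof -
  let ?M = "cyclic_subspace (commutant A) \<xi>"
  let ?q = "orth_proj ?M"
  have bicommutant: "commutant (commutant A) = A"
    using A unfolding von_neumann_algebra_def by simp
  have "selfadjoint_set A"
    using A by (rule selfadjoint_set_von_neumann_algebra)
  then have M: "csubspace ?M" "closed ?M"
    unfolding selfadjoint_set_def by (simp_all add: csubspace_cyclic_subspace_commutant closed_cyclic_subspace)
  have e_A: "e \<in> A" and e_proj: "is_projection e"
    and e_min: "\<And>q. q \<in> A \<Longrightarrow> is_projection q \<Longrightarrow> \<forall>x\<in>A. omega \<xi> x = omega \<xi> (q \<circ> x \<circ> q) \<Longrightarrow> q \<circ> e = e"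
    using e unfolding is_support_projection_def by simp_all
  have "id \<in> A"
    using id_in_commutant[of "commutant A"] by (simp only: bicommutant)
  have "id \<xi> \<in> ?M"
    by (rule in_cyclic_subspace[OF id_in_commutant])
  then have "?q \<xi> = \<xi>"
    using orth_proj_id[OF M] by simp
  then have "\<forall>x\<in>A. omega \<xi> x = omega \<xi> (?q \<circ> x \<circ> ?q)"
    using omega_compress[OF is_adjoint_orth_proj[OF M]] by blast
  moreover have "?q \<in> A"
    using orth_proj_cyclic_subspace_in_bicommutant[OF \<open>selfadjoint_set A\<close>] by (simp only: bicommutant)
  ultimately have "?q \<circ> e = e"
    using e_min is_projection_orth_proj[OF M] by blast
  then have "e x \<in> ?M" for x
    using orth_proj_in[OF M, of "e x"] by (metis comp_apply)
  moreover have "e m = m" if "m \<in> ?M" for m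
  proof (rule cyclic_subspace_fixed[OF _ _ that])
    show "e \<in> commutant (commutant A)"
      using e_A by (simp only: bicommutant)
    show "e \<xi> = \<xi>"
      using support_projection_fixes_vector[OF e \<open>id \<in> A\<close>] .
  qed
  ultimately show ?thesis
    using orth_proj_eqI[OF M is_adjoint_projection[OF e_proj]] by simp
qed

text \<open>Every \<open>a \<in> A\<close> is \<open>h + \<i> k\<close> with selfadjoint \<open>h = (a + a\<^sup>*)/2\<close> and \<open>k = \<i>(a\<^sup>* - a)/2\<close> in \<open>A\<close>.\<close>
lemma von_neumann_algebra_vector_in_subspace:
  fixes A :: "('a::chilbert \<Rightarrow> 'a) set"
  assumes A: "von_neumann_algebra A" and M: "csubspace M"
    and selfadjoint: "\<forall>a\<in>A. adj a = a \<longrightarrow> a \<xi> \<in> M" and a: "a \<in> A"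
  shows "a \<xi> \<in> M"
proof -
  define part where "part c = (\<lambda>x. scaleC c (a x) + scaleC (cnj c) (adj a x))" for c
  have bicommutant: "commutant (commutant A) = A" and "adj a \<in> A" "bounded_op a"
    using A a unfolding von_neumann_algebra_def by blast+
  have "\<forall>S\<in>commutant A. bounded_op S"
    using bounded_op_commutant by blast
  then have "part c \<in> A" for c
    unfolding part_def using commutant_lincomb[of "commutant A" a "adj a"] a \<open>adj a \<in> A\<close> bicommutant
    by simp
  moreover have "adj (part c) = part c" for c
    unfolding part_def by (intro adj_eqI is_adjoint_lincomb_adjoint is_adjoint_adj \<open>bounded_op a\<close>)
  ultimately have "part c \<xi> \<in> M" for c
    using selfadjoint by blast
  moreover have "a \<xi> = part (1/2) \<xi> + scaleC \<i> (part (-\<i>/2) \<xi>)"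
    unfolding part_def by (rule cinner_ext) (simp add: cinner_add_left cinner_scaleC_left algebra_simps)
  ultimately show ?thesis
    using M unfolding csubspace_def by simp
qed

lemma orth_proj_cyclic_subspace_in_commutant:
  fixes A :: "('a::chilbert \<Rightarrow> 'a) set"
  assumes A: "von_neumann_algebra A"
    and selfadjoint: "\<forall>a\<in>A. adj a = a \<longrightarrow> a \<xi> \<in> cyclic_subspace (commutant A) \<xi>"
  shows "orth_proj (cyclic_subspace (commutant A) \<xi>) \<in> commutant A"
proof (rule orth_proj_in_commutant)
  let ?M = "cyclic_subspace (commutant A) \<xi>"
  have bicommutant: "commutant (commutant A) = A"
    using A unfolding von_neumann_algebra_def by simp
  show "selfadjoint_set A"
    using A by (rule selfadjoint_set_von_neumann_algebra)
  then show M: "csubspace ?M"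
    unfolding selfadjoint_set_def by (simp add: csubspace_cyclic_subspace_commutant)
  show "closed ?M"
    by (rule closed_cyclic_subspace)
  show "\<forall>a\<in>A. a ` ?M \<subseteq> ?M"
    using von_neumann_algebra_vector_in_subspace[OF A M selfadjoint]
      cyclic_subspace_bicommutant_invariant[of _ A \<xi>] bicommutant by simp
qed

theorem mainTheorem6:
  fixes A :: "('a::chilbert \<Rightarrow> 'a) set" and \<xi> :: 'a and eA :: "'a \<Rightarrow> 'a"
  assumes "von_neumann_algebra A"
    and "is_support_projection A \<xi> eA"
    and "\<forall>a\<in>A. adj a = a \<longrightarrow>
           (\<forall>\<epsilon>>0. \<exists>ah\<in>commutant A. norm (a \<xi> - ah \<xi>) < \<epsilon>)"
  shows "\<forall>a\<in>A. eA \<circ> a = a \<circ> eA"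
proof -
  have "a \<xi> \<in> cyclic_subspace (commutant A) \<xi>" if a: "a \<in> A" "adj a = a" for a
    unfolding cyclic_subspace_def closure_approachable
  proof (intro allI impI)
    fix \<epsilon> :: real assume "\<epsilon> > 0"
    then obtain ah where "ah \<in> commutant A" "norm (a \<xi> - ah \<xi>) < \<epsilon>"
      using assms(3) a by blast
    then show "\<exists>y\<in>(\<lambda>T. T \<xi>) ` commutant A. dist y (a \<xi>) < \<epsilon>"
      by (auto simp: dist_norm norm_minus_commute)
  qed
  then have "orth_proj (cyclic_subspace (commutant A) \<xi>) \<in> commutant A"
    using orth_proj_cyclic_subspace_in_commutant[OF assms(1)] by blast
  then show ?thesis
    using support_projection_eq_orth_proj[OF assms(1,2)] unfolding commutant_def by blast
qed

end
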